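(* Fix any $(2^{nR},2^{nR_f},n)$ code for the wiretap channel with causal state information and secure feedback described in the context, and let $M,X^n,Y^n,Z^n,S^n,K_f^n$ be the induced random variables. Then for each $j\in\{1,\dots,n\}$, \begin{multline*} H(K^{j}_{f}|Z^{j},S^{j})+I(M,X^{j};Y^{j}|K^{j}_{f},Z^{j},S^{j})+H(S^{j}|Z^{j})\\ \le H(K^{j-1}_{f}|Z^{j-1},S^{j-1})+I(M,X^{j-1};Y^{j-1}|K^{j-1}_{f},Z^{j-1},S^{j-1})+H(S^{j-1}|Z^{j-1})\\ +H(K_{j}^{f}|M,X^{j-1},K^{j-1}_{f},Z^{j-1},S^{j-1})+I(X_{j};Y_{j}|Z_{j},S_{j})+H(S_{j}|Z_{j}), \end{multline*} where quantities involving sequences of length $0$ are interpreted with empty sequences.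
   Context: Model: finite alphabets; state $S^n$ i.i.d. $\sim p(s)$; memoryless channel $p(y_i,z_i|x^i,y^{i-1},z^{i-1},s_i)=p(y_i,z_i|x_i,s_i)$, with $Y$ the legitimate output and $Z$ the eavesdropper output. The message $M$ is uniform on $\{1,\dots,2^{nR}\}$ and independent of $S^n$. Feedback symbols $K^f_i$, $i=1,\dots,n$, are generated according to $p(k^f_i|y^{i-1},k_f^{i-1})$, where $K^{i}_f=(K^f_1,\dots,K^f_i)$ denotes the feedback vector (and $K^f_i$ a single symbol); the encoder produces $X_i$ according to $p(x_i|m,x^{i-1},s^i,k_f^i)$. Notation $A^j=(A_1,\dots,A_j)$. *)

theory Defs
  imports "HOL-Probability.Probability"
begin

definition cond_entropy :: "'w pmf \<Rightarrow> ('w \<Rightarrow> 'a) \<Rightarrow> ('w \<Rightarrow> 'b) \<Rightarrow> real" where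
  "cond_entropy P X Y =
     - (\<Sum>ab\<in>set_pmf (map_pmf (\<lambda>w. (X w, Y w)) P).
          pmf (map_pmf (\<lambda>w. (X w, Y w)) P) ab *
          log 2 (pmf (map_pmf (\<lambda>w. (X w, Y w)) P) ab / pmf (map_pmf Y P) (snd ab)))"

definition cond_mutual_info ::
  "'w pmf \<Rightarrow> ('w \<Rightarrow> 'a) \<Rightarrow> ('w \<Rightarrow> 'b) \<Rightarrow> ('w \<Rightarrow> 'c) \<Rightarrow> real" where
  "cond_mutual_info P X Y Z = cond_entropy P X Z - cond_entropy P X (\<lambda>w. (Y w, Z w))"

text \<open>An outcome is the message together with the trace of per-time symbols
  (S_i, K^f_i, X_i, Y_i, Z_i), i = 1..length of the trace.
  Parameters:
   N   : number of messages (message uniform on {1..N}),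
   PS  : state distribution p(s),
   W   : channel p(y,z|x,s),
   F   : feedback generator p(k_i | y^{i-1}, k^{i-1}),
   Enc : encoder p(x_i | m, x^{i-1}, s^i, k^i).
  The time index i is implicit in the lengths of the argument lists,
  so time-varying feedback/encoding functions are covered.\<close>

type_synonym ('s,'k,'x,'y,'z) sym = "'s \<times> 'k \<times> 'x \<times> 'y \<times> 'z"

definition sS :: "('s,'k,'x,'y,'z) sym \<Rightarrow> 's" where "sS t = fst t"
definition sK :: "('s,'k,'x,'y,'z) sym \<Rightarrow> 'k" where "sK t = fst (snd t)"
definition sX :: "('s,'k,'x,'y,'z) sym \<Rightarrow> 'x" where "sX t = fst (snd (snd t))"
definition sY :: "('s,'k,'x,'y,'z) sym \<Rightarrow> 'y" where "sY t = fst (snd (snd (snd t)))"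
definition sZ :: "('s,'k,'x,'y,'z) sym \<Rightarrow> 'z" where "sZ t = snd (snd (snd (snd t)))"

primrec code_dist ::
  "nat \<Rightarrow> 's pmf \<Rightarrow> ('x \<Rightarrow> 's \<Rightarrow> ('y \<times> 'z) pmf) \<Rightarrow> ('y list \<Rightarrow> 'k list \<Rightarrow> 'k pmf)
   \<Rightarrow> (nat \<Rightarrow> 'x list \<Rightarrow> 's list \<Rightarrow> 'k list \<Rightarrow> 'x pmf) \<Rightarrow> nat
   \<Rightarrow> (nat \<times> ('s,'k,'x,'y,'z) sym list) pmf" where
  "code_dist N PS W F Enc 0 = map_pmf (\<lambda>m. (m, [])) (pmf_of_set {1..N})"
| "code_dist N PS W F Enc (Suc i) =
     bind_pmf (code_dist N PS W F Enc i) (\<lambda>(m, tr).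
     bind_pmf PS (\<lambda>s.
     bind_pmf (F (map sY tr) (map sK tr)) (\<lambda>k.
     bind_pmf (Enc m (map sX tr) (map sS tr @ [s]) (map sK tr @ [k])) (\<lambda>x.
     bind_pmf (W x s) (\<lambda>(y, z).
     return_pmf (m, tr @ [(s, k, x, y, z)]))))))"

text \<open>Random variables on the outcome space: prefixes A^j (length j, empty for j = 0)
  and single symbols A_j (1-based).\<close>
definition Mv :: "nat \<times> ('s,'k,'x,'y,'z) sym list \<Rightarrow> nat" where "Mv w = fst w"
definition Sseq :: "nat \<Rightarrow> nat \<times> ('s,'k,'x,'y,'z) sym list \<Rightarrow> 's list" where "Sseq j w = map sS (take j (snd w))"
definition Kseq :: "nat \<Rightarrow> nat \<times> ('s,'k,'x,'y,'z) sym list \<Rightarrow> 'k list" where "Kseq j w = map sK (take j (snd w))"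
definition Xseq :: "nat \<Rightarrow> nat \<times> ('s,'k,'x,'y,'z) sym list \<Rightarrow> 'x list" where "Xseq j w = map sX (take j (snd w))"
definition Yseq :: "nat \<Rightarrow> nat \<times> ('s,'k,'x,'y,'z) sym list \<Rightarrow> 'y list" where "Yseq j w = map sY (take j (snd w))"
definition Zseq :: "nat \<Rightarrow> nat \<times> ('s,'k,'x,'y,'z) sym list \<Rightarrow> 'z list" where "Zseq j w = map sZ (take j (snd w))"
definition Ssym :: "nat \<Rightarrow> nat \<times> ('s,'k,'x,'y,'z) sym list \<Rightarrow> 's" where "Ssym j w = sS (snd w ! (j - 1))"
definition Ksym :: "nat \<Rightarrow> nat \<times> ('s,'k,'x,'y,'z) sym list \<Rightarrow> 'k" where "Ksym j w = sK (snd w ! (j - 1))"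
definition Xsym :: "nat \<Rightarrow> nat \<times> ('s,'k,'x,'y,'z) sym list \<Rightarrow> 'x" where "Xsym j w = sX (snd w ! (j - 1))"
definition Ysym :: "nat \<Rightarrow> nat \<times> ('s,'k,'x,'y,'z) sym list \<Rightarrow> 'y" where "Ysym j w = sY (snd w ! (j - 1))"
definition Zsym :: "nat \<Rightarrow> nat \<times> ('s,'k,'x,'y,'z) sym list \<Rightarrow> 'z" where "Zsym j w = sZ (snd w ! (j - 1))"

end

theory Submission
  imports Defs
begin

text \<open>Every term is a difference of joint entropies of the first \<open>j\<close> time steps. Four
  conditional independences hold for any code: the feedback symbol \<open>K_j\<close> sees the past only through
  \<open>(Y^(j-1), K^(j-1))\<close>, the state \<open>S_j\<close> is fresh, \<open>(X_j, Z_j)\<close> does not see \<open>Y^(j-1)\<close> given the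
  encoder inputs, and the channel outputs \<open>(Y_j, Z_j)\<close> see the past only through \<open>(X_j, S_j)\<close>.
  They turn the increment of the left-hand side into entropies that two instances of
  "conditioning does not increase entropy" bound by the new terms on the right.\<close>

section \<open>Entropy of finitely supported distributions\<close>

definition pmf_entropy :: "'w pmf \<Rightarrow> ('w \<Rightarrow> 'a) \<Rightarrow> real" where
  "pmf_entropy P X = - (\<Sum>w\<in>set_pmf P. pmf P w * log 2 (pmf (map_pmf X P) (X w)))"

definition info_equiv :: "'w pmf \<Rightarrow> ('w \<Rightarrow> 'a) \<Rightarrow> ('w \<Rightarrow> 'b) \<Rightarrow> bool" where
  "info_equiv P A B \<longleftrightarrow> (\<forall>w\<in>set_pmf P. \<forall>w'\<in>set_pmf P. A w = A w' \<longleftrightarrow> B w = B w')"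

lemma pmf_map_pos: "w \<in> set_pmf P \<Longrightarrow> 0 < pmf (map_pmf X P) (X w)"
  by (simp add: pmf_positive)

lemma pmf_map_eq_sum:
  assumes "finite (set_pmf P)"
  shows "pmf (map_pmf X P) v = sum (pmf P) {w\<in>set_pmf P. X w = v}"
proof -
  have "pmf (map_pmf X P) v = measure P (X -` {v} \<inter> set_pmf P)"
    by (simp add: pmf_map measure_Int_set_pmf)
  also have "\<dots> = sum (pmf P) (X -` {v} \<inter> set_pmf P)"
    using assms by (simp add: measure_measure_pmf_finite)
  also have "X -` {v} \<inter> set_pmf P = {w\<in>set_pmf P. X w = v}" by auto
  finally show ?thesis .
qed

lemma sum_set_pmf_map:
  assumes f: "finite (set_pmf P)"
  shows "(\<Sum>t\<in>set_pmf (map_pmf X P). pmf (map_pmf X P) t * h t) = (\<Sum>w\<in>set_pmf P. pmf P w * h (X w))"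
proof -
  have "(\<Sum>t\<in>set_pmf (map_pmf X P). pmf (map_pmf X P) t * h t)
      = (\<Sum>t\<in>set_pmf (map_pmf X P). \<Sum>w\<in>{w\<in>set_pmf P. X w = t}. pmf P w * h (X w))"
    by (intro sum.cong refl) (simp add: pmf_map_eq_sum[OF f] sum_distrib_right)
  also have "\<dots> = (\<Sum>w\<in>set_pmf P. pmf P w * h (X w))"
    using f by (intro sum.group) auto
  finally show ?thesis .
qed

lemma sum_pmf_map_pair_fst:
  assumes f: "finite (set_pmf P)"
  shows "(\<Sum>x\<in>set_pmf (map_pmf X P). pmf (map_pmf (\<lambda>w. (X w, Y w)) P) (x, y)) = pmf (map_pmf Y P) y"
proof -
  have "(\<Sum>x\<in>set_pmf (map_pmf X P). pmf (map_pmf (\<lambda>w. (X w, Y w)) P) (x, y))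
     = (\<Sum>x\<in>set_pmf (map_pmf X P). sum (pmf P) {w\<in>{w\<in>set_pmf P. Y w = y}. X w = x})"
    by (intro sum.cong refl) (simp add: pmf_map_eq_sum[OF f] conj_commute conj_left_commute)
  also have "\<dots> = sum (pmf P) {w\<in>set_pmf P. Y w = y}"
    using f by (intro sum.group) auto
  finally show ?thesis by (simp add: pmf_map_eq_sum[OF f])
qed

lemma cond_entropy_eq_pmf_entropy_diff:
  assumes f: "finite (set_pmf P)"
  shows "cond_entropy P X Y = pmf_entropy P (\<lambda>w. (X w, Y w)) - pmf_entropy P Y"
proof -
  have "log 2 (pmf (map_pmf (\<lambda>w. (X w, Y w)) P) (X w, Y w) / pmf (map_pmf Y P) (Y w))
      = log 2 (pmf (map_pmf (\<lambda>w. (X w, Y w)) P) (X w, Y w)) - log 2 (pmf (map_pmf Y P) (Y w))"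
    if "w \<in> set_pmf P" for w
    using pmf_map_pos[OF that, of "\<lambda>w. (X w, Y w)"] pmf_map_pos[OF that, of Y]
    by (simp add: log_divide)
  then show ?thesis
    unfolding cond_entropy_def pmf_entropy_def sum_set_pmf_map[OF f]
    by (simp add: right_diff_distrib sum_subtractf cong: sum.cong)
qed

lemma pmf_entropy_cong:
  assumes "info_equiv P A B" and f: "finite (set_pmf P)"
  shows "pmf_entropy P A = pmf_entropy P B"
proof -
  have "{w'\<in>set_pmf P. A w' = A w} = {w'\<in>set_pmf P. B w' = B w}" if "w \<in> set_pmf P" for w
    using assms(1) that unfolding info_equiv_def by blast
  then show ?thesis
    unfolding pmf_entropy_def by (simp add: pmf_map_eq_sum[OF f] cong: sum.cong)
qed

lemma pmf_entropy_add_eq_of_pmf_mult_eq: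
  assumes f: "finite (set_pmf P)"
    and eq: "\<And>w. w \<in> set_pmf P \<Longrightarrow> pmf (map_pmf A P) (A w) * pmf (map_pmf B P) (B w)
             = pmf (map_pmf C P) (C w) * pmf (map_pmf D P) (D w)"
  shows "pmf_entropy P A + pmf_entropy P B = pmf_entropy P C + pmf_entropy P D"
proof -
  have "log 2 (pmf (map_pmf A P) (A w)) + log 2 (pmf (map_pmf B P) (B w))
      = log 2 (pmf (map_pmf C P) (C w)) + log 2 (pmf (map_pmf D P) (D w))"
    if w: "w \<in> set_pmf P" for w
  proof -
    note pos = pmf_map_pos[OF w]
    have "log 2 (pmf (map_pmf A P) (A w)) + log 2 (pmf (map_pmf B P) (B w))
        = log 2 (pmf (map_pmf A P) (A w) * pmf (map_pmf B P) (B w))"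
      using pos[of A] pos[of B] by (simp add: log_mult)
    also have "\<dots> = log 2 (pmf (map_pmf C P) (C w) * pmf (map_pmf D P) (D w))"
      using eq[OF w] by simp
    also have "\<dots> = log 2 (pmf (map_pmf C P) (C w)) + log 2 (pmf (map_pmf D P) (D w))"
      using pos[of C] pos[of D] by (simp add: log_mult)
    finally show ?thesis .
  qed
  then have "(\<Sum>w\<in>set_pmf P. pmf P w * log 2 (pmf (map_pmf A P) (A w)) + pmf P w * log 2 (pmf (map_pmf B P) (B w)))
    = (\<Sum>w\<in>set_pmf P. pmf P w * log 2 (pmf (map_pmf C P) (C w)) + pmf P w * log 2 (pmf (map_pmf D P) (D w)))"
    by (intro sum.cong refl) (simp add: distrib_left[symmetric])
  then show ?thesis unfolding pmf_entropy_def by (simp add: sum.distrib)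
qed

text \<open>\<open>q(x,y,z) = p(x,y) p(y,z) / p(y)\<close> is the law under which \<open>X\<close> and \<open>Z\<close> are independent
  given \<open>Y\<close>; its mass on the support of \<open>(X,Y,Z)\<close> is at most one.\<close>
lemma sum_cond_indep_law_le_one:
  assumes f: "finite (set_pmf P)"
  shows "(\<Sum>t\<in>set_pmf (map_pmf (\<lambda>w. (X w, Y w, Z w)) P).
           pmf (map_pmf (\<lambda>w. (X w, Y w)) P) (fst t, fst (snd t)) * pmf (map_pmf (\<lambda>w. (Y w, Z w)) P) (snd t)
           / pmf (map_pmf Y P) (fst (snd t))) \<le> 1"
    (is "(\<Sum>t\<in>_. ?q t) \<le> 1")
proof -
  let ?XS = "set_pmf (map_pmf X P)" and ?YZ = "map_pmf (\<lambda>w. (Y w, Z w)) P"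
  have "(\<Sum>t\<in>set_pmf (map_pmf (\<lambda>w. (X w, Y w, Z w)) P). ?q t) \<le> (\<Sum>t\<in>?XS \<times> set_pmf ?YZ. ?q t)"
    using f by (intro sum_mono2) auto
  also have "\<dots> = (\<Sum>x\<in>?XS. \<Sum>yz\<in>set_pmf ?YZ. ?q (x, yz))"
    by (simp add: sum.cartesian_product case_prod_unfold)
  also have "\<dots> = (\<Sum>yz\<in>set_pmf ?YZ. \<Sum>x\<in>?XS. ?q (x, yz))"
    by (rule sum.swap)
  also have "\<dots> = (\<Sum>yz\<in>set_pmf ?YZ. pmf ?YZ yz)"
  proof (intro sum.cong refl)
    fix yz assume "yz \<in> set_pmf ?YZ"
    then obtain w where w: "w \<in> set_pmf P" "yz = (Y w, Z w)" by auto
    have "(\<Sum>x\<in>?XS. ?q (x, yz))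
        = (\<Sum>x\<in>?XS. pmf (map_pmf (\<lambda>w. (X w, Y w)) P) (x, fst yz)) * pmf ?YZ yz / pmf (map_pmf Y P) (fst yz)"
      by (simp add: sum_distrib_right sum_divide_distrib)
    also have "\<dots> = pmf ?YZ yz"
      unfolding sum_pmf_map_pair_fst[OF f] using pmf_map_pos[OF w(1), of Y] w(2) by simp
    finally show "(\<Sum>x\<in>?XS. ?q (x, yz)) = pmf ?YZ yz" .
  qed
  also have "\<dots> = 1" using f by (intro sum_pmf_eq_1) auto
  finally show ?thesis .
qed

lemma pmf_entropy_submodular:
  assumes f: "finite (set_pmf P)"
  shows "pmf_entropy P (\<lambda>w. (X w, Y w, Z w)) + pmf_entropy P Y
    \<le> pmf_entropy P (\<lambda>w. (X w, Y w)) + pmf_entropy P (\<lambda>w. (Y w, Z w))"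
proof -
  define T where "T = (\<lambda>w. (X w, Y w, Z w))"
  define q where "q t = pmf (map_pmf (\<lambda>w. (X w, Y w)) P) (fst t, fst (snd t))
    * pmf (map_pmf (\<lambda>w. (Y w, Z w)) P) (snd t) / pmf (map_pmf Y P) (fst (snd t))" for t
  define r where "r w = q (T w) / pmf (map_pmf T P) (T w)" for w
  have log_r: "log 2 (r w) = log 2 (pmf (map_pmf (\<lambda>w. (X w, Y w)) P) (X w, Y w))
      + log 2 (pmf (map_pmf (\<lambda>w. (Y w, Z w)) P) (Y w, Z w))
      - log 2 (pmf (map_pmf T P) (T w)) - log 2 (pmf (map_pmf Y P) (Y w))"
    and r_pos: "0 < r w" if w: "w \<in> set_pmf P" for w
    using pmf_map_pos[OF w, of T] pmf_map_pos[OF w, of "\<lambda>w. (X w, Y w)"]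
      pmf_map_pos[OF w, of "\<lambda>w. (Y w, Z w)"] pmf_map_pos[OF w, of Y]
    by (simp_all add: r_def q_def T_def log_mult log_divide)
  have "pmf_entropy P T + pmf_entropy P Y - pmf_entropy P (\<lambda>w. (X w, Y w)) - pmf_entropy P (\<lambda>w. (Y w, Z w))
      = (\<Sum>w\<in>set_pmf P. pmf P w * log 2 (r w))"
    unfolding pmf_entropy_def
    by (simp add: log_r algebra_simps sum.distrib sum_subtractf cong: sum.cong)
  also have "\<dots> \<le> (\<Sum>w\<in>set_pmf P. pmf P w * ((r w - 1) / ln 2))"
    using ln_le_minus_one[OF r_pos]
    by (intro sum_mono mult_left_mono) (simp_all add: log_def divide_right_mono)
  also have "\<dots> = ((\<Sum>w\<in>set_pmf P. pmf P w * r w) - (\<Sum>w\<in>set_pmf P. pmf P w)) / ln 2"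
    by (simp add: sum_divide_distrib[symmetric] right_diff_distrib sum_subtractf)
  also have "(\<Sum>w\<in>set_pmf P. pmf P w * r w)
      = (\<Sum>t\<in>set_pmf (map_pmf T P). pmf (map_pmf T P) t * (q t / pmf (map_pmf T P) t))"
    unfolding r_def by (subst sum_set_pmf_map[OF f]) simp
  also have "\<dots> = (\<Sum>t\<in>set_pmf (map_pmf T P). q t)"
    by (intro sum.cong refl) (simp add: pmf_positive[THEN less_imp_neq, symmetric])
  also have "(\<Sum>w\<in>set_pmf P. pmf P w) = 1" using f by (intro sum_pmf_eq_1) auto
  also have "((\<Sum>t\<in>set_pmf (map_pmf T P). q t) - 1) / ln 2 \<le> 0"
    using sum_cond_indep_law_le_one[OF f, of X Y Z] by (intro divide_nonpos_pos) (simp_all add: T_def q_def)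
  finally show ?thesis by (simp add: T_def)
qed

lemma pmf_entropy_submodular_info_equiv:
  assumes f: "finite (set_pmf P)"
    and "info_equiv P E1 (\<lambda>w. (X w, Y w, Z w))" "info_equiv P E2 Y"
    and "info_equiv P E3 (\<lambda>w. (X w, Y w))" "info_equiv P E4 (\<lambda>w. (Y w, Z w))"
  shows "pmf_entropy P E1 + pmf_entropy P E2 \<le> pmf_entropy P E3 + pmf_entropy P E4"
  using pmf_entropy_submodular[OF f, of X Y Z] assms(2-) by (simp add: pmf_entropy_cong[OF _ f])

lemma pmf_map_bind_kernel:
  fixes D :: "'a pmf" and K :: "'a \<Rightarrow> 'b pmf" and N :: "'a \<Rightarrow> 'b \<Rightarrow> 't pmf"
  assumes KL: "\<And>a. a \<in> set_pmf D \<Longrightarrow> K a = L (\<alpha> a)"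
    and support: "\<And>a b t. a \<in> set_pmf D \<Longrightarrow> b \<in> set_pmf (K a) \<Longrightarrow> t \<in> set_pmf (N a b) \<Longrightarrow>
       \<Phi> t = \<phi> b \<and> A t = \<alpha> a \<and> \<Psi> t = \<psi> a"
  shows "pmf (map_pmf (\<lambda>t. (\<Phi> t, A t, \<Psi> t)) (bind_pmf D (\<lambda>a. bind_pmf (K a) (N a)))) (v, c, d)
     = pmf (map_pmf \<phi> (L c)) v * pmf (map_pmf (\<lambda>a. (\<alpha> a, \<psi> a)) D) (c, d)"
proof -
  have "map_pmf (\<lambda>t. (\<Phi> t, A t, \<Psi> t)) (bind_pmf D (\<lambda>a. bind_pmf (K a) (N a)))
      = bind_pmf D (\<lambda>a. bind_pmf (K a) (\<lambda>b. map_pmf (\<lambda>t. (\<Phi> t, A t, \<Psi> t)) (N a b)))"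
    by (simp add: map_bind_pmf)
  also have "\<dots> = bind_pmf D (\<lambda>a. map_pmf (\<lambda>b. (\<phi> b, \<alpha> a, \<psi> a)) (L (\<alpha> a)))"
  proof (intro bind_pmf_cong refl)
    fix a assume a: "a \<in> set_pmf D"
    have "bind_pmf (K a) (\<lambda>b. map_pmf (\<lambda>t. (\<Phi> t, A t, \<Psi> t)) (N a b))
        = bind_pmf (K a) (\<lambda>b. return_pmf (\<phi> b, \<alpha> a, \<psi> a))"
    proof (intro bind_pmf_cong refl)
      fix b assume b: "b \<in> set_pmf (K a)"
      have "map_pmf (\<lambda>t. (\<Phi> t, A t, \<Psi> t)) (N a b) = map_pmf (\<lambda>_. (\<phi> b, \<alpha> a, \<psi> a)) (N a b)"
        using support[OF a b] by (intro map_pmf_cong refl) auto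
      then show "map_pmf (\<lambda>t. (\<Phi> t, A t, \<Psi> t)) (N a b) = return_pmf (\<phi> b, \<alpha> a, \<psi> a)" by simp
    qed
    also have "\<dots> = map_pmf (\<lambda>b. (\<phi> b, \<alpha> a, \<psi> a)) (L (\<alpha> a))"
      by (simp add: map_pmf_def KL[OF a])
    finally show "bind_pmf (K a) (\<lambda>b. map_pmf (\<lambda>t. (\<Phi> t, A t, \<Psi> t)) (N a b))
        = map_pmf (\<lambda>b. (\<phi> b, \<alpha> a, \<psi> a)) (L (\<alpha> a))" .
  qed
  finally have e: "map_pmf (\<lambda>t. (\<Phi> t, A t, \<Psi> t)) (bind_pmf D (\<lambda>a. bind_pmf (K a) (N a)))
      = bind_pmf D (\<lambda>a. map_pmf (\<lambda>b. (\<phi> b, \<alpha> a, \<psi> a)) (L (\<alpha> a)))" .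
  have pt: "pmf (map_pmf (\<lambda>b. (\<phi> b, \<alpha> a, \<psi> a)) (L (\<alpha> a))) (v, c, d)
      = pmf (map_pmf \<phi> (L c)) v * indicator {a. (\<alpha> a, \<psi> a) = (c, d)} a" for a
  proof (cases "\<alpha> a = c \<and> \<psi> a = d")
    case True
    then have "(\<lambda>b. (\<phi> b, \<alpha> a, \<psi> a)) -` {(v, c, d)} = \<phi> -` {v}" by auto
    then show ?thesis using True by (simp add: pmf_map)
  next
    case False
    then have "(\<lambda>b. (\<phi> b, \<alpha> a, \<psi> a)) -` {(v, c, d)} = {}" by auto
    then show ?thesis using False by (simp add: pmf_map)
  qed
  show ?thesis
    unfolding e pmf_bind pt
    by (simp add: pmf_map vimage_def)
qed

lemma cond_entropy_cong:
  assumes "P = P'" "\<And>w. w \<in> set_pmf P' \<Longrightarrow> X w = X' w" "\<And>w. w \<in> set_pmf P' \<Longrightarrow> Y w = Y' w"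
  shows "cond_entropy P X Y = cond_entropy P' X' Y'"
proof -
  have "map_pmf (\<lambda>w. (X w, Y w)) P = map_pmf (\<lambda>w. (X' w, Y' w)) P'" "map_pmf Y P = map_pmf Y' P'"
    using assms by (auto intro: map_pmf_cong)
  then show ?thesis unfolding cond_entropy_def by simp
qed

lemma cond_mutual_info_cong:
  assumes "P = P'" "\<And>w. w \<in> set_pmf P' \<Longrightarrow> X w = X' w" "\<And>w. w \<in> set_pmf P' \<Longrightarrow> Y w = Y' w"
    "\<And>w. w \<in> set_pmf P' \<Longrightarrow> Z w = Z' w"
  shows "cond_mutual_info P X Y Z = cond_mutual_info P' X' Y' Z'"
  unfolding cond_mutual_info_def using assms by (simp cong: cond_entropy_cong)

lemma pmf_entropy_swap:
  assumes "finite (set_pmf P)"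
  shows "pmf_entropy P (\<lambda>w. (X w, Y w)) = pmf_entropy P (\<lambda>w. (Y w, X w))"
  using assms by (intro pmf_entropy_cong) (auto simp: info_equiv_def)

section \<open>Conditional independence\<close>

lemma pmf_map_comp_inj: "inj g \<Longrightarrow> pmf (map_pmf (\<lambda>w. g (f w)) P) (g x) = pmf (map_pmf f P) x"
  using pmf_map_inj'[of g "map_pmf f P" x] by (simp add: map_pmf_comp)

definition cond_indep :: "'w pmf \<Rightarrow> ('w \<Rightarrow> 'a) \<Rightarrow> ('w \<Rightarrow> 'b) \<Rightarrow> ('w \<Rightarrow> 'c) \<Rightarrow> bool" where
  "cond_indep P X Y Z \<longleftrightarrow> (\<forall>x y z.
     pmf (map_pmf (\<lambda>w. (X w, Z w, Y w)) P) (x, z, y) * pmf (map_pmf Z P) z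
     = pmf (map_pmf (\<lambda>w. (X w, Z w)) P) (x, z) * pmf (map_pmf (\<lambda>w. (Z w, Y w)) P) (z, y))"

lemma cond_indep_map_pmf:
  "cond_indep (map_pmf f P) X Y Z \<longleftrightarrow> cond_indep P (\<lambda>w. X (f w)) (\<lambda>w. Y (f w)) (\<lambda>w. Z (f w))"
  by (simp add: cond_indep_def map_pmf_comp)

lemma cond_indep_pmf_entropy_eq:
  assumes f: "finite (set_pmf P)" and "cond_indep P X Y Z"
    and "info_equiv P E1 (\<lambda>w. (X w, Z w, Y w))" "info_equiv P E2 Z"
    and "info_equiv P E3 (\<lambda>w. (X w, Z w))" "info_equiv P E4 (\<lambda>w. (Z w, Y w))"
  shows "pmf_entropy P E1 + pmf_entropy P E2 = pmf_entropy P E3 + pmf_entropy P E4"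
proof -
  have "pmf_entropy P (\<lambda>w. (X w, Z w, Y w)) + pmf_entropy P Z
      = pmf_entropy P (\<lambda>w. (X w, Z w)) + pmf_entropy P (\<lambda>w. (Z w, Y w))"
    using assms(2) by (intro pmf_entropy_add_eq_of_pmf_mult_eq[OF f]) (simp add: cond_indep_def)
  then show ?thesis using assms(3-) by (simp add: pmf_entropy_cong[OF _ f])
qed

text \<open>A sample \<open>b\<close> drawn from a kernel that sees the past \<open>a\<close> only through \<open>\<alpha> a\<close> is independent
  of any further function \<open>\<psi> a\<close> of the past, given \<open>\<alpha> a\<close>.\<close>
lemma cond_indep_kernel:
  fixes D :: "'a pmf" and K :: "'a \<Rightarrow> 'b pmf" and N :: "'a \<Rightarrow> 'b \<Rightarrow> 't pmf"
  assumes R: "R = bind_pmf D (\<lambda>a. bind_pmf (K a) (N a))"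
    and KL: "\<And>a. a \<in> set_pmf D \<Longrightarrow> K a = L (\<alpha> a)"
    and support: "\<And>a b t. a \<in> set_pmf D \<Longrightarrow> b \<in> set_pmf (K a) \<Longrightarrow> t \<in> set_pmf (N a b) \<Longrightarrow>
       \<Phi> t = \<phi> b \<and> A t = \<alpha> a \<and> \<Psi> t = \<psi> a"
  shows "cond_indep R \<Phi> \<Psi> A"
proof -
  \<comment> \<open>unit components let one factorisation lemma cover all four marginals\<close>
  have "pmf (map_pmf (\<lambda>t. (\<Phi> t, A t, \<Psi> t)) R) (v, c, d)
      = pmf (map_pmf \<phi> (L c)) v * pmf (map_pmf (\<lambda>a. (\<alpha> a, \<psi> a)) D) (c, d)"
    and "pmf (map_pmf (\<lambda>t. ((), A t, ())) R) ((), c, ())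
      = pmf (map_pmf (\<lambda>_. ()) (L c)) () * pmf (map_pmf (\<lambda>a. (\<alpha> a, ())) D) (c, ())"
    and "pmf (map_pmf (\<lambda>t. (\<Phi> t, A t, ())) R) (v, c, ())
      = pmf (map_pmf \<phi> (L c)) v * pmf (map_pmf (\<lambda>a. (\<alpha> a, ())) D) (c, ())"
    and "pmf (map_pmf (\<lambda>t. ((), A t, \<Psi> t)) R) ((), c, d)
      = pmf (map_pmf (\<lambda>_. ()) (L c)) () * pmf (map_pmf (\<lambda>a. (\<alpha> a, \<psi> a)) D) (c, d)" for v c d
    unfolding R by - (rule pmf_map_bind_kernel[where L=L and \<alpha>=\<alpha>]; use KL support in auto)+
  moreover have "pmf (map_pmf A R) c = pmf (map_pmf (\<lambda>t. ((), A t, ())) R) ((), c, ())"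
    and "pmf (map_pmf (\<lambda>t. (\<Phi> t, A t)) R) (v, c) = pmf (map_pmf (\<lambda>t. (\<Phi> t, A t, ())) R) (v, c, ())"
    and "pmf (map_pmf (\<lambda>t. (A t, \<Psi> t)) R) (c, d) = pmf (map_pmf (\<lambda>t. ((), A t, \<Psi> t)) R) ((), c, d)"
    for v c d
    using pmf_map_comp_inj[of "\<lambda>c. ((), c, ())" A R c]
      pmf_map_comp_inj[of "\<lambda>(v, c). (v, c, ())" "\<lambda>t. (\<Phi> t, A t)" R "(v, c)"]
      pmf_map_comp_inj[of "\<lambda>(c, d). ((), c, d)" "\<lambda>t. (A t, \<Psi> t)" R "(c, d)"]
    by (simp_all add: inj_def)
  ultimately show ?thesis
    unfolding cond_indep_def by (simp add: ac_simps)
qed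

section \<open>The entropy bound for one time step\<close>

lemma entropy_step_bound_of_cond_indep:
  fixes M :: "'w \<Rightarrow> 'm" and Xs :: "'w \<Rightarrow> 'x list" and Ys :: "'w \<Rightarrow> 'y list"
    and Ks :: "'w \<Rightarrow> 'k list" and Zs :: "'w \<Rightarrow> 'z list" and Ss :: "'w \<Rightarrow> 's list"
  assumes f: "finite (set_pmf P)"
    and feedback: "cond_indep P k (\<lambda>w. (M w, Xs w)) (\<lambda>w. (Ys w, Ks w, Zs w, Ss w))"
    and state: "cond_indep P s Ys (\<lambda>w. (M w, Xs w, Ks w, k w, Zs w, Ss w))"
    and encoder: "cond_indep P (\<lambda>w. (x w, z w)) Ys (\<lambda>w. (M w, Xs w, Ks w, k w, Zs w, Ss w, s w))"
    and channel: "cond_indep P (\<lambda>w. (y w, z w)) (\<lambda>w. (M w, Xs w, Ys w, Ks w, k w, Zs w, Ss w)) (\<lambda>w. (x w, s w))"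
    and channel_z: "cond_indep P z (\<lambda>w. (M w, Xs w, Ys w, Ks w, k w, Zs w, Ss w)) (\<lambda>w. (x w, s w))"
  shows
   "cond_entropy P (\<lambda>w. Ks w @ [k w]) (\<lambda>w. (Zs w @ [z w], Ss w @ [s w]))
    + cond_mutual_info P (\<lambda>w. (M w, Xs w @ [x w])) (\<lambda>w. Ys w @ [y w])
        (\<lambda>w. (Ks w @ [k w], Zs w @ [z w], Ss w @ [s w]))
    + cond_entropy P (\<lambda>w. Ss w @ [s w]) (\<lambda>w. Zs w @ [z w])
    \<le> cond_entropy P Ks (\<lambda>w. (Zs w, Ss w))
    + cond_mutual_info P (\<lambda>w. (M w, Xs w)) Ys (\<lambda>w. (Ks w, Zs w, Ss w))
    + cond_entropy P Ss Zs
    + cond_entropy P k (\<lambda>w. (M w, Xs w, Ks w, Zs w, Ss w))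
    + cond_mutual_info P x y (\<lambda>w. (z w, s w))
    + cond_entropy P s z"
proof -
  have feedback_eq: "pmf_entropy P (\<lambda>w. (M w, Xs w, Ys w, Ks w, k w, Zs w, Ss w))
      + pmf_entropy P (\<lambda>w. (Ys w, Ks w, Zs w, Ss w))
    = pmf_entropy P (\<lambda>w. (Ys w, Ks w, k w, Zs w, Ss w))
      + pmf_entropy P (\<lambda>w. ((M w, Xs w), Ys w, Ks w, Zs w, Ss w))"
    by (rule cond_indep_pmf_entropy_eq[OF f feedback]) (auto simp: info_equiv_def)
  have state_eq: "pmf_entropy P (\<lambda>w. (M w, Xs w, Ys w, Ks w, k w, Zs w, Ss w, s w))
      + pmf_entropy P (\<lambda>w. (k w, M w, Xs w, Ks w, Zs w, Ss w))
    = pmf_entropy P (\<lambda>w. (M w, Xs w, Ks w, k w, Zs w, Ss w, s w))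
      + pmf_entropy P (\<lambda>w. (M w, Xs w, Ys w, Ks w, k w, Zs w, Ss w))"
    by (rule cond_indep_pmf_entropy_eq[OF f state]) (auto simp: info_equiv_def)
  have encoder_eq: "pmf_entropy P (\<lambda>w. (M w, Xs w, x w, Ys w, Ks w, k w, Zs w, z w, Ss w, s w))
      + pmf_entropy P (\<lambda>w. (M w, Xs w, Ks w, k w, Zs w, Ss w, s w))
    = pmf_entropy P (\<lambda>w. ((M w, Xs w @ [x w]), Ks w @ [k w], Zs w @ [z w], Ss w @ [s w]))
      + pmf_entropy P (\<lambda>w. (M w, Xs w, Ys w, Ks w, k w, Zs w, Ss w, s w))"
    by (rule cond_indep_pmf_entropy_eq[OF f encoder]) (auto simp: info_equiv_def)
  have channel_eq: "pmf_entropy P (\<lambda>w. ((M w, Xs w @ [x w]), Ys w @ [y w], Ks w @ [k w], Zs w @ [z w], Ss w @ [s w]))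
      + pmf_entropy P (\<lambda>w. (x w, s w))
    = pmf_entropy P (\<lambda>w. (x w, y w, z w, s w))
      + pmf_entropy P (\<lambda>w. (M w, Xs w, x w, Ys w, Ks w, k w, Zs w, Ss w, s w))"
    by (rule cond_indep_pmf_entropy_eq[OF f channel]) (auto simp: info_equiv_def)
  have channel_z_eq: "pmf_entropy P (\<lambda>w. (M w, Xs w, x w, Ys w, Ks w, k w, Zs w, z w, Ss w, s w))
      + pmf_entropy P (\<lambda>w. (x w, s w))
    = pmf_entropy P (\<lambda>w. (x w, z w, s w))
      + pmf_entropy P (\<lambda>w. (M w, Xs w, x w, Ys w, Ks w, k w, Zs w, Ss w, s w))"
    by (rule cond_indep_pmf_entropy_eq[OF f channel_z]) (auto simp: info_equiv_def)
  have output_le: "pmf_entropy P (\<lambda>w. (Ys w @ [y w], Ks w @ [k w], Zs w @ [z w], Ss w @ [s w]))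
      + pmf_entropy P z
    \<le> pmf_entropy P (\<lambda>w. (y w, z w, s w))
      + pmf_entropy P (\<lambda>w. (Ys w, Ks w @ [k w], Zs w @ [z w], Ss w))"
    by (rule pmf_entropy_submodular_info_equiv[OF f,
          where X="\<lambda>w. (y w, s w)" and Y=z and Z="\<lambda>w. (Ks w, k w, Ys w, Ss w, Zs w)"])
      (auto simp: info_equiv_def)
  have eavesdropper_le: "pmf_entropy P (\<lambda>w. (Ys w, Ks w @ [k w], Zs w @ [z w], Ss w))
      + pmf_entropy P Zs
    \<le> pmf_entropy P (\<lambda>w. (Ys w, Ks w, k w, Zs w, Ss w)) + pmf_entropy P (\<lambda>w. Zs w @ [z w])"
    by (rule pmf_entropy_submodular_info_equiv[OF f,
          where X="\<lambda>w. (Ks w, k w, Ys w, Ss w)" and Y=Zs and Z=z])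
      (auto simp: info_equiv_def)
  have "pmf_entropy P (\<lambda>w. ((M w, Xs w), Ks w, Zs w, Ss w))
      = pmf_entropy P (\<lambda>w. (M w, Xs w, Ks w, Zs w, Ss w))"
    by (rule pmf_entropy_cong[OF _ f]) (auto simp: info_equiv_def)
  then show ?thesis
    unfolding cond_mutual_info_def cond_entropy_eq_pmf_entropy_diff[OF f]
    using feedback_eq state_eq encoder_eq channel_eq channel_z_eq output_le eavesdropper_le
      pmf_entropy_swap[OF f, of Ss Zs] pmf_entropy_swap[OF f, of s z]
      pmf_entropy_swap[OF f, of "\<lambda>w. Ss w @ [s w]" "\<lambda>w. Zs w @ [z w]"]
    by linarith
qed

section \<open>Codes, one time step at a time\<close>

definition extend_trace ::
  "(nat \<times> ('s,'k,'x,'y,'z) sym list) \<times> 'k \<times> 's \<times> 'x \<times> 'y \<times> 'z \<Rightarrow> nat \<times> ('s,'k,'x,'y,'z) sym list" where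
  "extend_trace t = (case t of ((m, tr), k, s, x, y, z) \<Rightarrow> (m, tr @ [(s, k, x, y, z)]))"

definition take_trace :: "nat \<Rightarrow> nat \<times> ('s,'k,'x,'y,'z) sym list \<Rightarrow> nat \<times> ('s,'k,'x,'y,'z) sym list" where
  "take_trace j w = (fst w, take j (snd w))"

lemma seq_take_trace:
  assumes "a \<le> b"
  shows "Kseq a (take_trace b w) = Kseq a w" "Sseq a (take_trace b w) = Sseq a w"
    "Xseq a (take_trace b w) = Xseq a w" "Yseq a (take_trace b w) = Yseq a w"
    "Zseq a (take_trace b w) = Zseq a w"
  using assms by (simp_all add: take_trace_def Kseq_def Sseq_def Xseq_def Yseq_def Zseq_def min_absorb1)

lemma Mv_take_trace: "Mv (take_trace b w) = Mv w"
  by (simp add: take_trace_def Mv_def)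

lemma sym_take_trace:
  assumes "1 \<le> a" "a \<le> b"
  shows "Ksym a (take_trace b w) = Ksym a w" "Ssym a (take_trace b w) = Ssym a w"
    "Xsym a (take_trace b w) = Xsym a w" "Ysym a (take_trace b w) = Ysym a w"
    "Zsym a (take_trace b w) = Zsym a w"
  using assms by (simp_all add: take_trace_def Ksym_def Ssym_def Xsym_def Ysym_def Zsym_def)

lemma seq_Suc_eq_snoc:
  assumes "Suc i \<le> length (snd w)"
  shows "Kseq (Suc i) w = Kseq i w @ [Ksym (Suc i) w]" "Sseq (Suc i) w = Sseq i w @ [Ssym (Suc i) w]"
    "Xseq (Suc i) w = Xseq i w @ [Xsym (Suc i) w]" "Yseq (Suc i) w = Yseq i w @ [Ysym (Suc i) w]"
    "Zseq (Suc i) w = Zseq i w @ [Zsym (Suc i) w]"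
  using assms by (simp_all add: Kseq_def Sseq_def Xseq_def Yseq_def Zseq_def
      Ksym_def Ssym_def Xsym_def Ysym_def Zsym_def take_Suc_conv_app_nth)

context
  fixes N :: nat
    and PS :: "'s::finite pmf"
    and W :: "'x::finite \<Rightarrow> 's \<Rightarrow> ('y::finite \<times> 'z::finite) pmf"
    and F :: "'y list \<Rightarrow> 'k::finite list \<Rightarrow> 'k pmf"
    and Enc :: "nat \<Rightarrow> 'x list \<Rightarrow> 's list \<Rightarrow> 'k list \<Rightarrow> 'x pmf"
begin

text \<open>Unlike in
  \<open>code_dist\<close>, the feedback symbol is drawn before the state (they are independent given the past),
  so that every new symbol is drawn from a kernel applied to all that was drawn before it.\<close>
definition code_step :: "nat \<Rightarrow> ((nat \<times> ('s,'k,'x,'y,'z) sym list) \<times> 'k \<times> 's \<times> 'x \<times> 'y \<times> 'z) pmf" where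
  "code_step i = bind_pmf (code_dist N PS W F Enc i) (\<lambda>u.
     bind_pmf (F (map sY (snd u)) (map sK (snd u))) (\<lambda>k.
     bind_pmf PS (\<lambda>s.
     bind_pmf (Enc (fst u) (map sX (snd u)) (map sS (snd u) @ [s]) (map sK (snd u) @ [k])) (\<lambda>x.
     map_pmf (\<lambda>(y, z). (u, k, s, x, y, z)) (W x s)))))"

lemma code_dist_Suc_eq_map_code_step: "code_dist N PS W F Enc (Suc i) = map_pmf extend_trace (code_step i)"
  unfolding code_step_def code_dist.simps map_bind_pmf
  by (intro bind_pmf_cong refl)
    (simp add: map_bind_pmf map_pmf_def bind_assoc_pmf bind_return_pmf extend_trace_def case_prod_unfold
      bind_commute_pmf[of PS])

lemma fst_in_set_pmf_code_step: "t \<in> set_pmf (code_step i) \<Longrightarrow> fst t \<in> set_pmf (code_dist N PS W F Enc i)"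
  unfolding code_step_def by auto

lemma length_code_dist: "w \<in> set_pmf (code_dist N PS W F Enc i) \<Longrightarrow> length (snd w) = i"
proof (induction i arbitrary: w)
  case (Suc i)
  then obtain t where "t \<in> set_pmf (code_step i)" "w = extend_trace t"
    unfolding code_dist_Suc_eq_map_code_step by auto
  with Suc.IH[OF fst_in_set_pmf_code_step] show ?case by (auto simp: extend_trace_def case_prod_unfold)
qed auto

lemma extend_trace_simps:
  assumes "u \<in> set_pmf (code_dist N PS W F Enc i)"
  shows "Mv (extend_trace (u, k, s, x, y, z)) = fst u"
    "Kseq i (extend_trace (u, k, s, x, y, z)) = map sK (snd u)"
    "Sseq i (extend_trace (u, k, s, x, y, z)) = map sS (snd u)"
    "Xseq i (extend_trace (u, k, s, x, y, z)) = map sX (snd u)"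
    "Yseq i (extend_trace (u, k, s, x, y, z)) = map sY (snd u)"
    "Zseq i (extend_trace (u, k, s, x, y, z)) = map sZ (snd u)"
    "Ksym (Suc i) (extend_trace (u, k, s, x, y, z)) = k"
    "Ssym (Suc i) (extend_trace (u, k, s, x, y, z)) = s"
    "Xsym (Suc i) (extend_trace (u, k, s, x, y, z)) = x"
    "Ysym (Suc i) (extend_trace (u, k, s, x, y, z)) = y"
    "Zsym (Suc i) (extend_trace (u, k, s, x, y, z)) = z"
  using length_code_dist[OF assms]
  by (simp_all add: extend_trace_def case_prod_unfold Mv_def Kseq_def Sseq_def Xseq_def Yseq_def Zseq_def
      Ksym_def Ssym_def Xsym_def Ysym_def Zsym_def sK_def sS_def sX_def sY_def sZ_def nth_append)

lemma finite_set_pmf_code_dist: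
  assumes "N \<ge> 1"
  shows "finite (set_pmf (code_dist N PS W F Enc i))"
proof (induction i)
  case (Suc i)
  have "set_pmf (code_step i) \<subseteq> set_pmf (code_dist N PS W F Enc i) \<times> UNIV"
    using fst_in_set_pmf_code_step by fastforce
  then have "finite (set_pmf (code_step i))"
    using finite_subset finite_cartesian_product[OF Suc finite_class.finite_UNIV] by blast
  then show ?case unfolding code_dist_Suc_eq_map_code_step by simp
qed (use assms in simp)

lemma map_pmf_fst_code_step: "map_pmf fst (code_step i) = code_dist N PS W F Enc i"
  unfolding code_step_def by (simp add: map_bind_pmf map_pmf_comp case_prod_unfold bind_return_pmf')

lemma map_pmf_take_trace_code_dist:
  assumes "j \<le> n"
  shows "map_pmf (take_trace j) (code_dist N PS W F Enc n) = code_dist N PS W F Enc j"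
  using assms
proof (induction n rule: dec_induct)
  case base
  show ?case by (intro map_pmf_idI) (simp add: take_trace_def length_code_dist)
next
  case (step n)
  have "take_trace j (extend_trace t) = take_trace j (fst t)" if "t \<in> set_pmf (code_step n)" for t
    using length_code_dist[OF fst_in_set_pmf_code_step[OF that]] step.hyps(1)
    by (auto simp: take_trace_def extend_trace_def case_prod_unfold)
  then have "map_pmf (take_trace j) (code_dist N PS W F Enc (Suc n))
      = map_pmf (take_trace j) (map_pmf fst (code_step n))"
    unfolding code_dist_Suc_eq_map_code_step map_pmf_comp by (rule map_pmf_cong[OF refl])
  then show ?case by (simp add: map_pmf_fst_code_step step.IH)
qed

lemma cond_indep_code_dist:
  assumes "Suc i \<le> n"
    and "cond_indep (code_step i) (\<lambda>t. X (extend_trace t)) (\<lambda>t. Y (extend_trace t)) (\<lambda>t. Z (extend_trace t))"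
    and "\<And>w. X (take_trace (Suc i) w) = X w" "\<And>w. Y (take_trace (Suc i) w) = Y w"
    and "\<And>w. Z (take_trace (Suc i) w) = Z w"
  shows "cond_indep (code_dist N PS W F Enc n) X Y Z"
proof -
  have "cond_indep (code_dist N PS W F Enc (Suc i)) X Y Z"
    unfolding code_dist_Suc_eq_map_code_step cond_indep_map_pmf by (rule assms(2))
  then have "cond_indep (map_pmf (take_trace (Suc i)) (code_dist N PS W F Enc n)) X Y Z"
    by (simp only: map_pmf_take_trace_code_dist[OF assms(1)])
  then show ?thesis
    using assms(3-) by (simp add: cond_indep_map_pmf)
qed

lemma code_dist_feedback_cond_indep:
  assumes "Suc i \<le> n"
  shows "cond_indep (code_dist N PS W F Enc n) (Ksym (Suc i)) (\<lambda>w. (Mv w, Xseq i w))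
    (\<lambda>w. (Yseq i w, Kseq i w, Zseq i w, Sseq i w))"
  apply (rule cond_indep_code_dist[OF assms])
  subgoal
    by (rule cond_indep_kernel[where D="code_dist N PS W F Enc i"
          and K="\<lambda>u. F (map sY (snd u)) (map sK (snd u))" and L="\<lambda>(ys, ks, _). F ys ks"
          and \<alpha>="\<lambda>u. (map sY (snd u), map sK (snd u), map sZ (snd u), map sS (snd u))"
          and \<phi>="\<lambda>k. k" and \<psi>="\<lambda>u. (fst u, map sX (snd u))"])
      (auto simp: code_step_def extend_trace_simps)
  by (simp_all add: seq_take_trace sym_take_trace Mv_take_trace)

lemma code_dist_state_cond_indep:
  assumes "Suc i \<le> n"
  shows "cond_indep (code_dist N PS W F Enc n) (Ssym (Suc i)) (Yseq i)
    (\<lambda>w. (Mv w, Xseq i w, Kseq i w, Ksym (Suc i) w, Zseq i w, Sseq i w))"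
  apply (rule cond_indep_code_dist[OF assms])
  subgoal
    by (rule cond_indep_kernel[where
          D="bind_pmf (code_dist N PS W F Enc i) (\<lambda>u. map_pmf (Pair u) (F (map sY (snd u)) (map sK (snd u))))"
          and K="\<lambda>_. PS" and L="\<lambda>_. PS"
          and N="\<lambda>(u, k) s. bind_pmf (Enc (fst u) (map sX (snd u)) (map sS (snd u) @ [s]) (map sK (snd u) @ [k]))
                   (\<lambda>x. map_pmf (\<lambda>(y, z). (u, k, s, x, y, z)) (W x s))"
          and \<alpha>="\<lambda>(u, k). (fst u, map sX (snd u), map sK (snd u), k, map sZ (snd u), map sS (snd u))"
          and \<phi>="\<lambda>s. s" and \<psi>="\<lambda>(u, _). map sY (snd u)"])
      (auto simp: code_step_def map_pmf_def bind_assoc_pmf bind_return_pmf extend_trace_simps)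
  by (simp_all add: seq_take_trace sym_take_trace Mv_take_trace)

lemma code_dist_encoder_cond_indep:
  assumes "Suc i \<le> n"
  shows "cond_indep (code_dist N PS W F Enc n) (\<lambda>w. (Xsym (Suc i) w, Zsym (Suc i) w)) (Yseq i)
    (\<lambda>w. (Mv w, Xseq i w, Kseq i w, Ksym (Suc i) w, Zseq i w, Sseq i w, Ssym (Suc i) w))"
  apply (rule cond_indep_code_dist[OF assms])
  subgoal
    by (rule cond_indep_kernel[where
          D="bind_pmf (code_dist N PS W F Enc i) (\<lambda>u. bind_pmf (F (map sY (snd u)) (map sK (snd u)))
               (\<lambda>k. map_pmf (\<lambda>s. (u, k, s)) PS))"
          and K="\<lambda>(u, k, s). bind_pmf (Enc (fst u) (map sX (snd u)) (map sS (snd u) @ [s]) (map sK (snd u) @ [k]))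
                   (\<lambda>x. map_pmf (Pair x) (W x s))"
          and L="\<lambda>(m, xs, ks, k, zs, ss, s). bind_pmf (Enc m xs (ss @ [s]) (ks @ [k]))
                   (\<lambda>x. map_pmf (Pair x) (W x s))"
          and N="\<lambda>(u, k, s) (x, y, z). return_pmf (u, k, s, x, y, z)"
          and \<alpha>="\<lambda>(u, k, s). (fst u, map sX (snd u), map sK (snd u), k, map sZ (snd u), map sS (snd u), s)"
          and \<phi>="\<lambda>(x, y, z). (x, z)" and \<psi>="\<lambda>(u, _). map sY (snd u)"])
      (auto simp: code_step_def map_pmf_def bind_assoc_pmf bind_return_pmf extend_trace_simps)
  by (simp_all add: seq_take_trace sym_take_trace Mv_take_trace)

lemma code_dist_channel_cond_indep:
  assumes "Suc i \<le> n"
  shows "cond_indep (code_dist N PS W F Enc n) (\<lambda>w. g (Ysym (Suc i) w, Zsym (Suc i) w))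
    (\<lambda>w. (Mv w, Xseq i w, Yseq i w, Kseq i w, Ksym (Suc i) w, Zseq i w, Sseq i w))
    (\<lambda>w. (Xsym (Suc i) w, Ssym (Suc i) w))"
  apply (rule cond_indep_code_dist[OF assms])
  subgoal
    by (rule cond_indep_kernel[where
          D="bind_pmf (code_dist N PS W F Enc i) (\<lambda>u. bind_pmf (F (map sY (snd u)) (map sK (snd u)))
               (\<lambda>k. bind_pmf PS (\<lambda>s.
                 map_pmf (\<lambda>x. (u, k, s, x)) (Enc (fst u) (map sX (snd u)) (map sS (snd u) @ [s]) (map sK (snd u) @ [k])))))"
          and K="\<lambda>(u, k, s, x). W x s" and L="\<lambda>(x, s). W x s"
          and N="\<lambda>(u, k, s, x) (y, z). return_pmf (u, k, s, x, y, z)"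
          and \<alpha>="\<lambda>(u, k, s, x). (x, s)" and \<phi>=g
          and \<psi>="\<lambda>(u, k, s, x). (fst u, map sX (snd u), map sY (snd u), map sK (snd u), k, map sZ (snd u),
                   map sS (snd u))"])
      (auto simp: code_step_def map_pmf_def bind_assoc_pmf bind_return_pmf extend_trace_simps case_prod_unfold)
  by (simp_all add: seq_take_trace sym_take_trace Mv_take_trace)

end

theorem lemma1:
  fixes N n j :: nat
    and PS :: "'s::finite pmf"
    and W :: "'x::finite \<Rightarrow> 's \<Rightarrow> ('y::finite \<times> 'z::finite) pmf"
    and F :: "'y list \<Rightarrow> 'k::finite list \<Rightarrow> 'k pmf"
    and Enc :: "nat \<Rightarrow> 'x list \<Rightarrow> 's list \<Rightarrow> 'k list \<Rightarrow> 'x pmf"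
  defines "P \<equiv> code_dist N PS W F Enc n"
  assumes "N \<ge> 1"
    and "1 \<le> j" and "j \<le> n"
  shows
   "cond_entropy P (Kseq j) (\<lambda>w. (Zseq j w, Sseq j w))
    + cond_mutual_info P (\<lambda>w. (Mv w, Xseq j w)) (Yseq j) (\<lambda>w. (Kseq j w, Zseq j w, Sseq j w))
    + cond_entropy P (Sseq j) (Zseq j)
    \<le> cond_entropy P (Kseq (j - 1)) (\<lambda>w. (Zseq (j - 1) w, Sseq (j - 1) w))
    + cond_mutual_info P (\<lambda>w. (Mv w, Xseq (j - 1) w)) (Yseq (j - 1))
        (\<lambda>w. (Kseq (j - 1) w, Zseq (j - 1) w, Sseq (j - 1) w))
    + cond_entropy P (Sseq (j - 1)) (Zseq (j - 1))
    + cond_entropy P (Ksym j)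
        (\<lambda>w. (Mv w, Xseq (j - 1) w, Kseq (j - 1) w, Zseq (j - 1) w, Sseq (j - 1) w))
    + cond_mutual_info P (Xsym j) (Ysym j) (\<lambda>w. (Zsym j w, Ssym j w))
    + cond_entropy P (Ssym j) (Zsym j)"
proof -
  obtain i where j: "j = Suc i" using \<open>1 \<le> j\<close> by (cases j) auto
  have i: "Suc i \<le> n" using \<open>j \<le> n\<close> j by simp
  have length_ge: "Suc i \<le> length (snd w)" if "w \<in> set_pmf (code_dist N PS W F Enc n)" for w
    using length_code_dist[OF that] i by simp
  show ?thesis
    unfolding P_def j diff_Suc_1
    \<comment> \<open>on the support, \<open>A^j = A^(j-1) @ [A_j]\<close>\<close>
    using entropy_step_bound_of_cond_indep[OF finite_set_pmf_code_dist[OF \<open>N \<ge> 1\<close>]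
        code_dist_feedback_cond_indep[OF i] code_dist_state_cond_indep[OF i]
        code_dist_encoder_cond_indep[OF i] code_dist_channel_cond_indep[OF i, where g="\<lambda>yz. yz"]
        code_dist_channel_cond_indep[OF i, where g=snd, unfolded snd_conv]]
    by (simp only: seq_Suc_eq_snoc[OF length_ge] cong: cond_entropy_cong cond_mutual_info_cong)
qed

end
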